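(* Let $p$ be a prime with $p\equiv 3\pmod 4$. Then for every pattern $w\in\{r,n\}^3$ of length $3$, the number of occurrences of $w$ in $\mathbb{Z}_p$ is either $\lfloor\frac{p-3}{8}\rfloor$ or $\lceil\frac{p-3}{8}\rceil$.
   Context: An element $x\in\mathbb{Z}_p\setminus\{0\}$ is a quadratic residue (denoted $r$) if $x\equiv y^2\pmod p$ for some integer $y$, and a nonresidue (denoted $n$) otherwise. For a word $w=w_0w_1\cdots w_{k-1}\in\{r,n\}^k$ (a pattern of length $k$), an occurrence of $w$ in $\mathbb{Z}_p$ is an element $a\in\mathbb{Z}_p$ such that the $k$ consecutive elements $a,a+1,\dots,a+(k-1)$ (computed in $\mathbb{Z}_p$) are all nonzero and, for each $0\le i\le k-1$, $a+i$ is a quadratic residue if $w_i=r$ and a nonresidue if $w_i=n$. The number of occurrences of $w$ is the number of such $a$. *)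

theory Defs
  imports "HOL-Number_Theory.Number_Theory"
begin

text \<open>Letters of a pattern: True stands for r (quadratic residue),
  False stands for n (nonresidue).\<close>

definition has_letter :: "int \<Rightarrow> int \<Rightarrow> bool \<Rightarrow> bool" where
  "has_letter p x b \<longleftrightarrow> x mod p \<noteq> 0 \<and> (QuadRes p x \<longleftrightarrow> b)"

definition occurrences :: "int \<Rightarrow> bool list \<Rightarrow> int set" where
  "occurrences p w = {a \<in> {0..<p}. \<forall>i < length w. has_letter p ((a + int i) mod p) (w ! i)}"

definition num_occurrences :: "int \<Rightarrow> bool list \<Rightarrow> nat" where
  "num_occurrences p w = card (occurrences p w)"

end

theory Submission
  imports Defs
begin

text \<open>
  Write \<open>\<chi>\<close> for the Legendre symbol modulo \<open>p\<close> and \<open>\<epsilon>\<^sub>i = \<plusminus>1\<close> for the letters of the pattern.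
  If none of \<open>a, a + 1, a + 2\<close> is \<open>0\<close> modulo \<open>p\<close>, the weight
  \<open>(1 + \<epsilon>\<^sub>0 \<chi>(a)) (1 + \<epsilon>\<^sub>1 \<chi>(a + 1)) (1 + \<epsilon>\<^sub>2 \<chi>(a + 2))\<close> is \<open>8\<close> if the pattern occurs at \<open>a\<close>
  and \<open>0\<close> otherwise.  Summing the expanded weight over all of \<open>\<int>\<^sub>p\<close> gives
  \<open>p - (\<epsilon>\<^sub>0\<epsilon>\<^sub>1 + \<epsilon>\<^sub>0\<epsilon>\<^sub>2 + \<epsilon>\<^sub>1\<epsilon>\<^sub>2)\<close>: the sums of \<open>\<chi>\<close> vanish (multiply by a nonresidue), the
  correlations \<open>\<Sum> \<chi>(a) \<chi>(a + k)\<close> equal \<open>-1\<close> (substitute \<open>a \<mapsto> a\<inverse>\<close>), and, as \<open>\<chi>(-1) = -1\<close>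
  for \<open>p \<equiv> 3 (mod 4)\<close>, the reflection \<open>a \<mapsto> -2 - a\<close> shows \<open>\<Sum> \<chi>(a) \<chi>(a + 1) \<chi>(a + 2) = 0\<close>.
  The three windows through \<open>0\<close> change the count by a bounded amount, and one finds
  \<open>\<bar>8 N - (p - 3)\<bar> \<le> 4\<close> for the number \<open>N\<close> of occurrences.
\<close>

lemma prime_cong_3_mod_4_gt_2:
  fixes p :: int
  assumes "prime p" "[p = 3] (mod 4)"
  shows "p > 2"
proof -
  have "p \<noteq> 2" using assms(2) by (auto simp: cong_def)
  then show ?thesis using prime_ge_2_int[OF assms(1)] by simp
qed

lemma cong_imp_eq_abs_le_1:
  fixes p x y :: int
  assumes "p > 2" "[x = y] (mod p)" "\<bar>x\<bar> \<le> 1" "\<bar>y\<bar> \<le> 1"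
  shows "x = y"
proof (rule ccontr)
  assume "x \<noteq> y"
  moreover have "p dvd x - y" using assms(2) by (simp add: cong_iff_dvd_diff)
  ultimately have "\<bar>p\<bar> \<le> \<bar>x - y\<bar>" by (intro dvd_imp_le_int) simp_all
  then show False using assms by linarith
qed

lemma Legendre_cong:
  assumes "[x = y] (mod p)"
  shows "Legendre x p = Legendre y p"
proof -
  have "[x = 0] (mod p) \<longleftrightarrow> [y = 0] (mod p)"
    using assms cong_sym cong_trans by blast
  moreover have "QuadRes p x \<longleftrightarrow> QuadRes p y"
    using assms cong_sym cong_trans unfolding QuadRes_def by blast
  ultimately show ?thesis unfolding Legendre_def by simp
qed

lemma Legendre_add_cong:
  assumes "[x = y] (mod p)"
  shows "Legendre (x + k) p = Legendre (y + k) p"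
  using assms by (intro Legendre_cong cong_add cong_refl)

lemma Legendre_mod [simp]: "Legendre (x mod p) p = Legendre x p"
  by (rule Legendre_cong) (simp add: cong_def)

lemma Legendre_cases: "Legendre x p = 0 \<or> Legendre x p = 1 \<or> Legendre x p = -1"
  unfolding Legendre_def by auto

lemma Legendre_eq_0_iff: "Legendre x p = 0 \<longleftrightarrow> p dvd x"
  unfolding Legendre_def by (auto simp: cong_0_iff)

lemma Legendre_one:
  assumes "p > 1"
  shows "Legendre 1 p = 1"
proof -
  have "\<not> [1 = 0] (mod p)" using assms by (simp add: cong_def)
  moreover have "QuadRes p 1" unfolding QuadRes_def by (rule exI[of _ 1]) simp
  ultimately show ?thesis by (simp add: Legendre_def)
qed

lemma Legendre_euler:
  fixes p :: int
  assumes "prime p" "p > 2"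
  shows "[Legendre x p = x ^ nat ((p - 1) div 2)] (mod p)"
proof -
  have "prime (nat p)" "2 < nat p" using assms by auto
  from euler_criterion[OF this, of x]
  have "[Legendre x (int (nat p)) = x ^ ((nat p - 1) div 2)] (mod int (nat p))" .
  moreover have "(nat p - 1) div 2 = nat ((p - 1) div 2)"
    by (simp add: nat_diff_distrib nat_div_distrib)
  ultimately show ?thesis using assms by simp
qed

lemma Legendre_mult:
  fixes p :: int
  assumes "prime p" "p > 2"
  shows "Legendre (x * y) p = Legendre x p * Legendre y p"
proof (rule cong_imp_eq_abs_le_1[OF \<open>p > 2\<close>])
  let ?n = "nat ((p - 1) div 2)"
  have "[Legendre x p * Legendre y p = x ^ ?n * y ^ ?n] (mod p)"
    by (intro cong_mult Legendre_euler[OF assms])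
  then show "[Legendre (x * y) p = Legendre x p * Legendre y p] (mod p)"
    using Legendre_euler[OF assms, of "x * y"] unfolding power_mult_distrib
    using cong_sym cong_trans by blast
  show "\<bar>Legendre (x * y) p\<bar> \<le> 1" using Legendre_cases[of "x * y" p] by auto
  show "\<bar>Legendre x p * Legendre y p\<bar> \<le> 1"
    using Legendre_cases[of x p] Legendre_cases[of y p] by auto
qed

lemma Legendre_minus_one:
  fixes p :: int
  assumes "prime p" "[p = 3] (mod 4)"
  shows "Legendre (-1) p = -1"
proof -
  define k where "k = p div 4"
  have "p > 2" using prime_cong_3_mod_4_gt_2[OF assms] .
  have "p = 4 * k + 3" using assms(2) div_mult_mod_eq[of p 4] by (simp add: cong_def k_def)
  with \<open>p > 2\<close> have "k \<ge> 0" by presburger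
  with \<open>p = 4 * k + 3\<close> have "nat ((p - 1) div 2) = Suc (2 * nat k)" by simp
  then have "[Legendre (-1) p = -1] (mod p)"
    using Legendre_euler[OF assms(1) \<open>p > 2\<close>, of "-1"] by (simp only: power_minus1_odd)
  then show ?thesis
    using cong_imp_eq_abs_le_1[OF \<open>p > 2\<close>] Legendre_cases[of "-1" p] by fastforce
qed

lemma Legendre_neg:
  fixes p :: int
  assumes "prime p" "[p = 3] (mod 4)"
  shows "Legendre (- x) p = - Legendre x p"
  using Legendre_mult[OF assms(1) prime_cong_3_mod_4_gt_2[OF assms], of "-1" x]
    Legendre_minus_one[OF assms] by simp

text \<open>A primitive root \<open>g\<close> is a nonresidue: Euler's criterion would otherwise give
  \<open>g\<^bsup>(p-1)/2\<^esup> \<equiv> 1\<close>, below the order of \<open>g\<close>.\<close>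

lemma Legendre_nonresidue_exists:
  fixes p :: int
  assumes "prime p" "p > 2"
  obtains g where "Legendre g p = -1"
proof -
  define q where "q = nat p"
  have q: "prime q" "2 < q" "p = int q" using assms by (auto simp: q_def)
  obtain g where "residue_primroot q g" using prime_primitive_root_exists[of q] q by auto
  then have "coprime q g" "ord q g = q - 1"
    by (simp_all add: residue_primroot_def totient_prime q)
  define m where "m = (q - 1) div 2"
  have "0 < m" "m < ord q g" using q(2) \<open>ord q g = q - 1\<close> by (auto simp: m_def)
  then have "\<not> [g ^ m = 1] (mod q)" by (rule ord_minimal)
  then have not_1: "\<not> [int g ^ m = 1] (mod p)"
    unfolding q(3) by (metis cong_int_iff of_nat_1 of_nat_power)
  have euler: "[Legendre (int g) p = int g ^ m] (mod p)"
    using euler_criterion[OF q(1,2), of "int g"] by (simp add: q(3) m_def)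
  have "\<not> q dvd g"
    using \<open>coprime q g\<close> q(1) coprime_absorb_left not_prime_unit by blast
  then have "Legendre (int g) p \<noteq> 0" by (simp add: Legendre_eq_0_iff q(3))
  moreover have "Legendre (int g) p \<noteq> 1" using euler not_1 cong_sym cong_trans by metis
  ultimately show ?thesis using that Legendre_cases by blast
qed

lemma coprime_if_prime_remainder:
  fixes p a :: int
  assumes "prime p" "a \<in> {1..<p}"
  shows "coprime a p"
  using prime_imp_coprime[OF assms(1), of a] zdvd_not_zless[of a p] assms(2)
  by (simp add: coprime_commute)

lemma bij_betw_remainders_affine:
  fixes p u c :: int
  assumes "p > 0" "coprime u p"
  shows "bij_betw (\<lambda>a. (u * a + c) mod p) {0..<p} {0..<p}"
proof -
  have "inj_on (\<lambda>a. (u * a + c) mod p) {0..<p}"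
  proof (rule inj_onI)
    fix a b
    assume a: "a \<in> {0..<p}" and b: "b \<in> {0..<p}" and "(u * a + c) mod p = (u * b + c) mod p"
    then have "[u * a = u * b] (mod p)"
      using cong_add_rcancel unfolding cong_def by blast
    then have "[a = b] (mod p)" using assms(2) by (simp add: cong_mult_lcancel)
    then show "a = b" using a b by (simp add: cong_def)
  qed
  moreover have "(\<lambda>a. (u * a + c) mod p) ` {0..<p} \<subseteq> {0..<p}" using assms(1) by auto
  ultimately show ?thesis using endo_inj_surj[of "{0..<p}"] by (simp add: bij_betw_def)
qed

lemma sum_remainders_affine:
  fixes p u c :: int and f :: "int \<Rightarrow> 'a::comm_monoid_add"
  assumes "p > 0" "coprime u p" and f: "\<And>x y. [x = y] (mod p) \<Longrightarrow> f x = f y"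
  shows "(\<Sum>a\<in>{0..<p}. f (u * a + c)) = (\<Sum>a\<in>{0..<p}. f a)"
proof -
  have "(\<Sum>a\<in>{0..<p}. f (u * a + c)) = (\<Sum>a\<in>{0..<p}. f ((u * a + c) mod p))"
    by (intro sum.cong refl f) (simp add: cong_def)
  also have "\<dots> = (\<Sum>a\<in>{0..<p}. f a)"
    using sum.reindex_bij_betw[OF bij_betw_remainders_affine[OF assms(1,2)]] .
  finally show ?thesis .
qed

lemma bij_betw_modular_inverse:
  fixes p :: int
  assumes "prime p"
  shows "bij_betw (modular_inverse p) {1..<p} {1..<p}"
proof -
  have "p > 1" using prime_gt_1_int[OF assms] .
  have maps_to: "modular_inverse p a \<in> {1..<p}" if "a \<in> {1..<p}" for a
    using mult_modular_inverse_int_pos[OF \<open>p > 1\<close> coprime_if_prime_remainder[OF assms that]]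
      modular_inverse_int_less[of p a] \<open>p > 1\<close> by simp
  have involutive: "modular_inverse p (modular_inverse p a) = a" if "a \<in> {1..<p}" for a
    by (rule modular_inverse_int_eqI)
      (use that cong_modular_inverse2[OF coprime_if_prime_remainder[OF assms that]] in auto)
  show ?thesis
    by (rule bij_betwI[where g = "modular_inverse p"]) (use maps_to involutive in auto)
qed

lemma sum_Legendre:
  fixes p c :: int
  assumes "prime p" "p > 2"
  shows "(\<Sum>a\<in>{0..<p}. Legendre (a + c) p) = 0"
proof -
  let ?S = "\<Sum>a\<in>{0..<p}. Legendre a p"
  have periodic: "\<And>x y. [x = y] (mod p) \<Longrightarrow> Legendre x p = Legendre y p"
    by (rule Legendre_cong)
  obtain g where g: "Legendre g p = -1" using Legendre_nonresidue_exists[OF assms] .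
  then have "\<not> p dvd g" by (auto simp: Legendre_eq_0_iff[symmetric])
  then have "coprime g p" using prime_imp_coprime[OF assms(1)] by (simp add: coprime_commute)
  have "?S = (\<Sum>a\<in>{0..<p}. Legendre (g * a + 0) p)"
    by (rule sum_remainders_affine[where f = "\<lambda>x. Legendre x p", symmetric])
      (use assms(2) \<open>coprime g p\<close> periodic in auto)
  also have "\<dots> = - ?S"
    using Legendre_mult[OF assms] g by (simp add: sum_negf)
  finally have "?S = 0" by simp
  moreover have "(\<Sum>a\<in>{0..<p}. Legendre (1 * a + c) p) = ?S"
    by (rule sum_remainders_affine[where f = "\<lambda>x. Legendre x p"]) (use assms(2) periodic in auto)
  ultimately show ?thesis by simp
qed

lemma Legendre_mult_shift_eq:
  fixes p a a' k :: int
  assumes "prime p" "p > 2" "[a * a' = 1] (mod p)"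
  shows "Legendre a p * Legendre (a + k) p = Legendre (1 + k * a') p"
proof -
  have "\<not> p dvd a'"
  proof
    assume "p dvd a'"
    then have "[a * a' = 0] (mod p)" by (simp add: cong_0_iff)
    with assms(3) have "[1 = 0] (mod p)" using cong_sym cong_trans by blast
    with assms(2) show False by (simp add: cong_def)
  qed
  then have "Legendre a' p * Legendre a' p = 1"
    using Legendre_cases[of a' p] by (auto simp: Legendre_eq_0_iff)
  moreover have "[(a * a') * (a * a' + k * a') = 1 * (1 + k * a')] (mod p)"
    using assms(3) by (intro cong_mult cong_add cong_refl)
  then have "Legendre (a * (a + k) * (a' * a')) p = Legendre (1 + k * a') p"
    by (intro Legendre_cong) (simp add: algebra_simps)
  ultimately show ?thesis by (simp add: Legendre_mult[OF assms(1,2)])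
qed

lemma sum_Legendre_mult_shift:
  fixes p c d :: int
  assumes "prime p" "p > 2" "\<not> p dvd d - c"
  shows "(\<Sum>a\<in>{0..<p}. Legendre (a + c) p * Legendre (a + d) p) = -1"
proof -
  define k where "k = d - c"
  have remainders: "{0..<p} = insert 0 {1..<p}" using assms(2) by auto
  have "coprime k p"
    using prime_imp_coprime[OF assms(1,3)] unfolding k_def by (rule coprime_commute[THEN iffD1])
  have "(\<Sum>a\<in>{0..<p}. Legendre (a + c) p * Legendre (a + d) p)
      = (\<Sum>a\<in>{0..<p}. Legendre (1 * a + c) p * Legendre (1 * a + c + k) p)"
    by (simp add: k_def)
  also have "\<dots> = (\<Sum>a\<in>{0..<p}. Legendre a p * Legendre (a + k) p)"
    by (rule sum_remainders_affine[where f = "\<lambda>x. Legendre x p * Legendre (x + k) p"])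
      (use assms(2) in \<open>auto simp: Legendre_cong Legendre_add_cong\<close>)
  also have "\<dots> = (\<Sum>a\<in>{1..<p}. Legendre a p * Legendre (a + k) p)"
    by (simp add: remainders Legendre_eq_0_iff)
  also have "\<dots> = (\<Sum>a\<in>{1..<p}. Legendre (1 + k * modular_inverse p a) p)"
    by (intro sum.cong refl Legendre_mult_shift_eq[OF assms(1,2)] cong_modular_inverse1
        coprime_if_prime_remainder[OF assms(1)])
  also have "\<dots> = (\<Sum>b\<in>{1..<p}. Legendre (1 + k * b) p)"
    using sum.reindex_bij_betw[OF bij_betw_modular_inverse[OF assms(1)]] .
  also have "\<dots> = (\<Sum>b\<in>{0..<p}. Legendre (k * b + 1) p) - Legendre 1 p"
    by (simp add: remainders add.commute)
  also have "(\<Sum>b\<in>{0..<p}. Legendre (k * b + 1) p) = (\<Sum>b\<in>{0..<p}. Legendre b p)"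
    by (rule sum_remainders_affine[where f = "\<lambda>x. Legendre x p"])
      (use assms(2) \<open>coprime k p\<close> in \<open>auto intro: Legendre_cong\<close>)
  finally show ?thesis
    using sum_Legendre[OF assms(1,2), of 0] Legendre_one[of p] assms(2) by simp
qed

lemma sum_Legendre_progression_3:
  fixes p k :: int
  assumes "prime p" "[p = 3] (mod 4)"
  shows "(\<Sum>a\<in>{0..<p}. Legendre a p * Legendre (a + k) p * Legendre (a + 2 * k) p) = 0"
proof -
  let ?g = "\<lambda>x. Legendre x p * Legendre (x + k) p * Legendre (x + 2 * k) p"
  have "p > 0" using prime_gt_0_int[OF assms(1)] .
  have "(\<Sum>a\<in>{0..<p}. ?g a) = (\<Sum>a\<in>{0..<p}. ?g (-1 * a + - 2 * k))"
    by (rule sum_remainders_affine[where f = ?g, symmetric])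
      (use \<open>p > 0\<close> in \<open>auto simp: Legendre_cong Legendre_add_cong\<close>)
  also have "\<dots> = (\<Sum>a\<in>{0..<p}. - ?g a)"
  proof (rule sum.cong[OF refl])
    fix a
    have "-1 * a + - 2 * k = - (a + 2 * k)" "-1 * a + - 2 * k + k = - (a + k)"
      "-1 * a + - 2 * k + 2 * k = - a" by simp_all
    then show "?g (-1 * a + - 2 * k) = - ?g a" by (simp only: Legendre_neg[OF assms]) simp
  qed
  also have "\<dots> = - (\<Sum>a\<in>{0..<p}. ?g a)" by (rule sum_negf)
  finally show ?thesis by simp
qed

definition letter_sign :: "bool \<Rightarrow> int" where
  "letter_sign b = (if b then 1 else -1)"

lemma has_letter_iff_Legendre: "has_letter p x b \<longleftrightarrow> Legendre x p = letter_sign b"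
  unfolding has_letter_def Legendre_def letter_sign_def cong_def by auto

lemma occurrences_length_3:
  "occurrences p [b0, b1, b2] = {a \<in> {0..<p}. Legendre a p = letter_sign b0
     \<and> Legendre (a + 1) p = letter_sign b1 \<and> Legendre (a + 2) p = letter_sign b2}"
  by (simp add: occurrences_def has_letter_iff_Legendre numeral_3_eq_3 All_less_Suc conj_ac)

lemma sign_product_indicator_3:
  fixes x0 x1 x2 e0 e1 e2 :: int
  assumes "x0 \<in> {-1, 1}" "x1 \<in> {-1, 1}" "x2 \<in> {-1, 1}"
    and "e0 \<in> {-1, 1}" "e1 \<in> {-1, 1}" "e2 \<in> {-1, 1}"
  shows "(1 + e0 * x0) * (1 + e1 * x1) * (1 + e2 * x2)
    = (if x0 = e0 \<and> x1 = e1 \<and> x2 = e2 then 8 else 0)"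
  using assms by auto

lemma sum_pattern_weight_3:
  fixes p e0 e1 e2 :: int
  assumes "prime p" "[p = 3] (mod 4)"
  shows "(\<Sum>a\<in>{0..<p}. (1 + e0 * Legendre a p) * (1 + e1 * Legendre (a + 1) p)
            * (1 + e2 * Legendre (a + 2) p))
    = p - (e0 * e1 + e0 * e2 + e1 * e2)"
proof -
  have "p > 2" using prime_cong_3_mod_4_gt_2[OF assms] .
  have single: "(\<Sum>a\<in>{0..<p}. Legendre (a + c) p) = 0" for c
    by (rule sum_Legendre[OF assms(1) \<open>p > 2\<close>])
  have pair: "(\<Sum>a\<in>{0..<p}. Legendre (a + c) p * Legendre (a + d) p) = -1"
    if "d - c \<in> {1, 2}" for c d
    using that \<open>p > 2\<close> zdvd_not_zless[of "d - c" p]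
    by (intro sum_Legendre_mult_shift[OF assms(1) \<open>p > 2\<close>]) auto
  have triple: "(\<Sum>a\<in>{0..<p}. Legendre a p * Legendre (a + 1) p * Legendre (a + 2) p) = 0"
    using sum_Legendre_progression_3[OF assms, of 1] by simp
  have "(\<Sum>a\<in>{0..<p}. (1 + e0 * Legendre a p) * (1 + e1 * Legendre (a + 1) p)
            * (1 + e2 * Legendre (a + 2) p))
    = (\<Sum>a\<in>{0..<p}. 1) + e0 * (\<Sum>a\<in>{0..<p}. Legendre (a + 0) p)
      + e1 * (\<Sum>a\<in>{0..<p}. Legendre (a + 1) p) + e2 * (\<Sum>a\<in>{0..<p}. Legendre (a + 2) p)
      + e0 * e1 * (\<Sum>a\<in>{0..<p}. Legendre (a + 0) p * Legendre (a + 1) p)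
      + e0 * e2 * (\<Sum>a\<in>{0..<p}. Legendre (a + 0) p * Legendre (a + 2) p)
      + e1 * e2 * (\<Sum>a\<in>{0..<p}. Legendre (a + 1) p * Legendre (a + 2) p)
      + e0 * e1 * e2 * (\<Sum>a\<in>{0..<p}. Legendre a p * Legendre (a + 1) p * Legendre (a + 2) p)"
    by (simp add: algebra_simps sum.distrib sum_distrib_left)
  also have "\<dots> = p - (e0 * e1 + e0 * e2 + e1 * e2)"
    using single[of 0] single[of 1] single[of 2] pair[where c = 0 and d = 1]
      pair[where c = 0 and d = 2] pair[where c = 1 and d = 2] triple \<open>p > 2\<close>
    by simp
  finally show ?thesis .
qed

text \<open>The windows \<open>a = 0, p - 2, p - 1\<close> contain \<open>0\<close> modulo \<open>p\<close>; there the weight is not an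
  indicator, and they are split off.\<close>

lemma card_Legendre_pattern_3_eq:
  fixes p e0 e1 e2 :: int
  assumes "prime p" "p > 2" "e0 \<in> {-1, 1}" "e1 \<in> {-1, 1}" "e2 \<in> {-1, 1}"
  defines "weight a \<equiv> (1 + e0 * Legendre a p) * (1 + e1 * Legendre (a + 1) p)
            * (1 + e2 * Legendre (a + 2) p)"
  shows "8 * int (card {a \<in> {0..<p}. Legendre a p = e0 \<and> Legendre (a + 1) p = e1
            \<and> Legendre (a + 2) p = e2})
    = (\<Sum>a\<in>{0..<p}. weight a) - (\<Sum>a\<in>{0, p - 2, p - 1}. weight a)"
    (is "8 * int (card ?S) = _")
proof -
  define C where "C = {0, p - 2, p - 1}"
  have units: "Legendre x p \<in> {-1, 1}" if "x \<in> {1..<p}" for x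
    using Legendre_cases[of x p] Legendre_eq_0_iff[of x p] zdvd_not_zless[of x p] that by auto
  have "Legendre 0 p = 0" "Legendre p p = 0" by (simp_all add: Legendre_eq_0_iff)
  then have "?S \<subseteq> {0..<p} - C"
    using assms(2-5) by (auto simp: C_def)
  then have S_filter: "?S = {a \<in> {0..<p} - C. a \<in> ?S}" by blast
  have "(\<Sum>a\<in>{0..<p} - C. weight a) = (\<Sum>a\<in>{0..<p} - C. if a \<in> ?S then 8 else 0)"
  proof (rule sum.cong[OF refl])
    fix a assume "a \<in> {0..<p} - C"
    then have "a \<in> {1..<p}" "a + 1 \<in> {1..<p}" "a + 2 \<in> {1..<p}" by (auto simp: C_def)
    then show "weight a = (if a \<in> ?S then 8 else 0)"
      using \<open>a \<in> {0..<p} - C\<close> units assms(3-5) unfolding weight_def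
      by (subst sign_product_indicator_3) auto
  qed
  also have "\<dots> = 8 * int (card ?S)"
    using sum.inter_filter[of "{0..<p} - C" "\<lambda>_. 8::int" "\<lambda>a. a \<in> ?S"] S_filter by simp
  finally have "(\<Sum>a\<in>{0..<p} - C. weight a) = 8 * int (card ?S)" .
  moreover have "(\<Sum>a\<in>{0..<p}. weight a) = (\<Sum>a\<in>{0..<p} - C. weight a) + (\<Sum>a\<in>C. weight a)"
    by (rule sum.subset_diff) (use assms(2) in \<open>auto simp: C_def\<close>)
  ultimately show ?thesis by (simp add: C_def)
qed

lemma card_Legendre_pattern_3:
  fixes p e0 e1 e2 :: int
  assumes "prime p" "[p = 3] (mod 4)" "e0 \<in> {-1, 1}" "e1 \<in> {-1, 1}" "e2 \<in> {-1, 1}"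
  shows "\<bar>8 * int (card {a \<in> {0..<p}. Legendre a p = e0 \<and> Legendre (a + 1) p = e1
            \<and> Legendre (a + 2) p = e2}) - (p - 3)\<bar> \<le> 4"
proof -
  define weight where "weight a = (1 + e0 * Legendre a p) * (1 + e1 * Legendre (a + 1) p)
            * (1 + e2 * Legendre (a + 2) p)" for a
  have "p > 2" using prime_cong_3_mod_4_gt_2[OF assms(1,2)] .
  have "Legendre 0 p = 0" "Legendre p p = 0" by (simp_all add: Legendre_eq_0_iff)
  moreover have "Legendre 1 p = 1" "Legendre (p + 1) p = 1"
    using Legendre_one[of p] Legendre_cong[of "p + 1" 1 p] \<open>p > 2\<close> by (simp_all add: cong_def)
  moreover have "Legendre (p - 1) p = -1"
    using Legendre_cong[of "p - 1" "-1" p] Legendre_minus_one[OF assms(1,2)]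
    by (simp add: cong_def)
  ultimately have boundary: "(\<Sum>a\<in>{0, p - 2, p - 1}. weight a)
      = (1 + e1) * (1 + e2 * Legendre 2 p) + (1 + e0 * Legendre (p - 2) p) * (1 - e1)
        + (1 - e0) * (1 + e2)"
    using \<open>p > 2\<close> by (simp add: weight_def algebra_simps)
  have bound: "\<bar>3 - (e0 * e1 + e0 * e2 + e1 * e2)
      - ((1 + e1) * (1 + e2 * c) + (1 + e0 * d) * (1 - e1) + (1 - e0) * (1 + e2))\<bar> \<le> 4"
    if "c \<in> {-1, 0, 1}" "d \<in> {-1, 0, 1}" for c d
    using that assms(3-5) by auto
  have "\<bar>3 - (e0 * e1 + e0 * e2 + e1 * e2) - (\<Sum>a\<in>{0, p - 2, p - 1}. weight a)\<bar> \<le> 4"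
    unfolding boundary by (rule bound) (use Legendre_cases[of _ p] in auto)
  then show ?thesis
    using card_Legendre_pattern_3_eq[OF assms(1) \<open>p > 2\<close> assms(3-5)]
      sum_pattern_weight_3[OF assms(1,2), of e0 e1 e2]
    unfolding weight_def by linarith
qed

lemma eq_floor_or_ceiling_divide:
  fixes N q d :: int
  assumes "d > 0" "\<bar>d * N - q\<bar> < d"
  shows "N = \<lfloor>real_of_int q / real_of_int d\<rfloor> \<or> N = \<lceil>real_of_int q / real_of_int d\<rceil>"
proof -
  have "real_of_int d > 0" using assms(1) by simp
  have close: "\<bar>real_of_int d * real_of_int N - real_of_int q\<bar> < real_of_int d"
    using assms(2) unfolding of_int_less_iff[symmetric, where 'a = real]
    by (simp only: of_int_abs of_int_diff of_int_mult)
  show ?thesis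
  proof (cases "real_of_int q \<le> real_of_int d * real_of_int N")
    case True
    with close \<open>real_of_int d > 0\<close> have "\<lceil>real_of_int q / real_of_int d\<rceil> = N"
      by (intro ceiling_unique) (simp_all add: field_simps abs_less_iff)
    then show ?thesis by simp
  next
    case False
    with close \<open>real_of_int d > 0\<close> have "\<lfloor>real_of_int q / real_of_int d\<rfloor> = N"
      by (intro floor_unique) (simp_all add: field_simps abs_less_iff)
    then show ?thesis by simp
  qed
qed

theorem corollary2p5:
  fixes p :: int and w :: "bool list"
  assumes "prime p" and "[p = 3] (mod 4)" and "length w = 3"
  shows "int (num_occurrences p w) = \<lfloor>real_of_int (p - 3) / 8\<rfloor>
       \<or> int (num_occurrences p w) = \<lceil>real_of_int (p - 3) / 8\<rceil>"
proof -
  obtain b0 b1 b2 where w: "w = [b0, b1, b2]"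
    using assms(3) by (metis length_0_conv length_Suc_conv numeral_3_eq_3)
  have "\<bar>8 * int (card (occurrences p w)) - (p - 3)\<bar> \<le> 4"
    unfolding w occurrences_length_3
    by (rule card_Legendre_pattern_3[OF assms(1,2)]) (simp_all add: letter_sign_def)
  then show ?thesis
    using eq_floor_or_ceiling_divide[of 8 "int (num_occurrences p w)" "p - 3"]
    unfolding num_occurrences_def by simp
qed

end
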